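(* Let $q\ge2$, let $s\ge2$ be an even integer, and let $\bm x=(x_1,\ldots,x_d)^\top$, $\bm y=(y_1,\ldots,y_d)^\top$ be random vectors in $\mathbb R^d$ with $\||\bm x|_s\|_q<\infty$ and $\||\bm y|_s\|_q<\infty$. Then $$\big\||\bm x+\bm y|_s\big\|_q^2\le\big\||\bm x|_s\big\|_q^2+2\big\||\bm x|_s\big\|_q^{2-q}\,\mathbb E\Big(|\bm x|_s^{q-s}\sum_{j=1}^dx_j^{s-1}y_j\Big)+\big(\max\{q,s\}-1\big)\big\||\bm y|_s\big\|_q^2,$$ where the middle term is interpreted as $0$ if $\||\bm x|_s\|_q=0$ and $|\bm x|_s^{q-s}\sum_jx_j^{s-1}y_j$ is interpreted as $0$ on $\{\bm x=0\}$. Moreover, if $\mathbb E[\bm y\mid\bm x]=0$ almost surely, then $$\big\||\bm x+\bm y|_s\big\|_q^2\le\big\||\bm x|_s\big\|_q^2+\big(\max\{q,s\}-1\big)\big\||\bm y|_s\big\|_q^2.$$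
   Context: $|\bm v|_s=(\sum_{i=1}^d|v_i|^s)^{1/s}$; for a real random variable $X$, $\|X\|_q=(\mathbb E|X|^q)^{1/q}$. *)

theory Defs
  imports "HOL-Probability.Probability"
begin

definition snorm :: "nat \<Rightarrow> real ^ 'd \<Rightarrow> real" where
  "snorm s v = (\<Sum>i\<in>UNIV. \<bar>v $ i\<bar> ^ s) powr (1 / real s)"

definition Lq_norm :: "'a measure \<Rightarrow> real \<Rightarrow> ('a \<Rightarrow> real) \<Rightarrow> real" where
  "Lq_norm M q Z = (\<integral>\<omega>. \<bar>Z \<omega>\<bar> powr q \<partial>M) powr (1 / q)"

end

theory Submission
  imports Defs
begin

text \<open>
  Write \<open>\<parallel>U\<parallel>\<close> for the \<open>L\<^sup>q(\<ell>\<^sup>s)\<close> norm of a random vector and \<open>\<kappa> = max q s - 1\<close>.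
  Pointwise, a second-order Taylor expansion of \<open>t \<mapsto> \<bar>x + t y\<bar>\<^sub>s\<^sup>q\<close>, whose second
  derivative H\<ouml>lder's inequality bounds by \<open>q \<kappa> (\<bar>x\<bar>\<^sub>s + \<bar>y\<bar>\<^sub>s)\<^bsup>q-2\<^esup> \<bar>y\<bar>\<^sub>s\<^sup>2\<close>,
  gives \<open>\<bar>x + y\<bar>\<^sub>s\<^sup>q \<le> \<bar>x\<bar>\<^sub>s\<^sup>q + q J(x) \<bullet> y + q \<kappa> / 2 (\<bar>x\<bar>\<^sub>s + \<bar>y\<bar>\<^sub>s)\<^bsup>q-2\<^esup> \<bar>y\<bar>\<^sub>s\<^sup>2\<close>,
  where \<open>J\<close> is the gradient of \<open>\<bar>x\<bar>\<^sub>s\<^sup>q / q\<close>. Integrating, bounding the remainder by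
  H\<ouml>lder and Minkowski, and passing to the concave power \<open>2 / q\<close> shows that near every point
  of the segment \<open>X + t Y\<close> the function \<open>\<phi> t = \<parallel>X + t Y\<parallel>\<^sup>2\<close> lies below its tangent plus
  \<open>(\<kappa> \<parallel>Y\<parallel>\<^sup>2 + o(1)) h\<^sup>2\<close>. Hence \<open>\<phi> t - \<kappa> \<parallel>Y\<parallel>\<^sup>2 t\<^sup>2\<close> is concave on \<open>[0, 1]\<close>, and
  comparing its chord with its right derivative at \<open>0\<close> gives the inequality. That derivative
  is \<open>2 \<parallel>X\<parallel>\<^bsup>2-q\<^esup> E (J(X) \<bullet> Y)\<close>, which vanishes when \<open>E[Y | X] = 0\<close>.
\<close>

section \<open>Inequalities for real powers\<close>

lemma weighted_geometric_mean_le: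
  fixes x y \<alpha> :: real
  assumes "x \<ge> 0" "y \<ge> 0" "0 \<le> \<alpha>" "\<alpha> \<le> 1"
  shows "x powr \<alpha> * y powr (1 - \<alpha>) \<le> \<alpha> * x + (1 - \<alpha>) * y"
proof (cases "x = 0 \<or> y = 0")
  case True
  then show ?thesis using assms by auto
next
  case False
  then show ?thesis using Youngs_inequality_0[of \<alpha> "1 - \<alpha>" x y] assms by simp
qed

lemma powr_le_tangent:
  fixes x c p :: real
  assumes "x \<ge> 0" "c > 0" "0 < p" "p \<le> 1"
  shows "x powr p \<le> c powr p + p * c powr (p - 1) * (x - c)"
proof -
  have "x powr p = x powr p * c powr (1 - p) * c powr (p - 1)"
    using assms by (simp add: mult.assoc flip: powr_add)
  also have "\<dots> \<le> (p * x + (1 - p) * c) * c powr (p - 1)"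
    using weighted_geometric_mean_le[of x c p] assms by (intro mult_right_mono) auto
  also have "\<dots> = c powr p + p * c powr (p - 1) * (x - c)"
    using assms by (simp add: algebra_simps powr_mult_base)
  finally show ?thesis .
qed

lemma powr_subadditive:
  fixes a b p :: real
  assumes "a \<ge> 0" "b \<ge> 0" "0 < p" "p \<le> 1"
  shows "(a + b) powr p \<le> a powr p + b powr p"
proof (cases "a + b = 0")
  case True
  then show ?thesis using assms by simp
next
  case False
  then have ab: "a + b > 0" using assms by simp
  have le: "z * (a + b) powr (p - 1) \<le> z powr p" if "0 \<le> z" "z \<le> a + b" for z
  proof (cases "z = 0")
    case False
    then have "z * (a + b) powr (p - 1) \<le> z * z powr (p - 1)"
      using that assms by (intro mult_left_mono powr_mono2') auto
    also have "\<dots> = z powr p" using False that by (simp add: powr_mult_base)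
    finally show ?thesis .
  qed simp
  have "(a + b) powr p = (a + b) * (a + b) powr (p - 1)"
    using ab by (simp add: powr_mult_base)
  also have "\<dots> = a * (a + b) powr (p - 1) + b * (a + b) powr (p - 1)"
    by (simp add: distrib_right)
  also have "\<dots> \<le> a powr p + b powr p" using le[of a] le[of b] assms by simp
  finally show ?thesis .
qed

lemma powr_le_of_le_mult_powr:
  fixes P C p :: real
  assumes "P \<ge> 0" "C \<ge> 0" "0 < p" "P \<le> C * P powr (1 - p)"
  shows "P powr p \<le> C"
proof (cases "P = 0")
  case False
  then have "P powr p * P powr (1 - p) \<le> C * P powr (1 - p)"
    using assms by (simp flip: powr_add)
  then show ?thesis using False assms(1) by simp
qed (use assms in simp)

lemma powr_mult_le_powr_add:
  fixes a b q :: real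
  assumes "a \<ge> 0" "b \<ge> 0" "q \<ge> 1"
  shows "a powr (q - 1) * b \<le> a powr q + b powr q"
proof (cases "b \<le> a")
  case True
  then have "a powr (q - 1) * b \<le> a powr (q - 1) * a" using assms by (intro mult_left_mono) auto
  also have "\<dots> \<le> a powr q" using assms by (cases "a = 0") (simp_all add: powr_mult_base mult.commute)
  finally show ?thesis using powr_ge_zero[of b q] by linarith
next
  case False
  then have "a powr (q - 1) * b \<le> b powr (q - 1) * b" using assms by (intro mult_right_mono powr_mono2) auto
  also have "\<dots> \<le> b powr q" using assms by (cases "b = 0") (simp_all add: powr_mult_base mult.commute)
  finally show ?thesis using powr_ge_zero[of a q] by linarith
qed

lemma powr_add_le_two_powr:
  fixes a b q :: real
  assumes "a \<ge> 0" "b \<ge> 0" "q \<ge> 0"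
  shows "(a + b) powr q \<le> 2 powr q * (a powr q + b powr q)"
proof -
  have "(a + b) powr q \<le> (2 * max a b) powr q"
    using assms by (intro powr_mono2) auto
  also have "\<dots> \<le> 2 powr q * (a powr q + b powr q)"
    using assms by (simp add: powr_mult max_def)
  finally show ?thesis .
qed

lemma powr_add_eq_Hoelder_terms:
  fixes a b q :: real
  assumes "a \<ge> 0" "b \<ge> 0" "q \<ge> 1"
  shows "(a + b) powr q = (a powr q) powr (1 / q) * ((a + b) powr q) powr (1 - 1 / q)
    + (b powr q) powr (1 / q) * ((a + b) powr q) powr (1 - 1 / q)"
proof (cases "a + b = 0")
  case False
  have "q * (1 - 1 / q) = q - 1" using assms by (simp add: field_simps)
  then have "(x powr q) powr (1 / q) * ((a + b) powr q) powr (1 - 1 / q) = x * (a + b) powr (q - 1)"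
    if "x \<ge> 0" for x
    using that assms by (simp add: powr_powr)
  moreover have "(a + b) powr q = (a + b) * (a + b) powr (q - 1)"
    using False assms by (simp add: powr_mult_base)
  ultimately show ?thesis using assms by (simp add: distrib_right)
qed (use assms in simp)

lemma powr_mult_power: "x > 0 \<Longrightarrow> x powr a * x ^ n = x powr (a + real n)"
  by (simp add: powr_add powr_realpow)

lemma powr_inverse_power: "n > 0 \<Longrightarrow> x \<ge> 0 \<Longrightarrow> (x powr (1 / real n)) ^ n = x"
  by (cases "x = 0") (simp_all add: powr_realpow' flip: powr_powr root_powr_inverse)

lemma power_powr_divide: "n > 0 \<Longrightarrow> k > 0 \<Longrightarrow> x \<ge> 0 \<Longrightarrow> (x ^ n) powr (real k / real n) = x ^ k"
  by (simp add: powr_powr flip: powr_realpow')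

section \<open>Second-order upper bounds and concavity\<close>

lemma Taylor_second_order_le:
  fixes f f' f'' :: "real \<Rightarrow> real"
  assumes "\<And>t. (f has_real_derivative f' t) (at t)" "\<And>t. (f' has_real_derivative f'' t) (at t)"
    and "\<And>t. 0 < t \<Longrightarrow> t < 1 \<Longrightarrow> f'' t \<le> C"
  shows "f 1 \<le> f 0 + f' 0 + C / 2"
proof -
  define diff where "diff m = (if m = 0 then f else if m = 1 then f' else f'')" for m :: nat
  have "\<exists>t>0. t < 1 \<and> f 1 = (\<Sum>m<2. diff m 0 / fact m * (1 - 0) ^ m) + diff 2 t / fact 2 * (1 - 0) ^ 2"
    by (rule Taylor_up) (use assms(1,2) in \<open>auto simp: diff_def less_2_cases_iff\<close>)
  then obtain t where "0 < t" "t < 1" "f 1 = f 0 + f' 0 + f'' t / 2"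
    by (auto simp: diff_def numeral_2_eq_2)
  then show ?thesis using assms(3) by simp
qed

lemma chord_le_of_second_differences:
  fixes \<psi> :: "real \<Rightarrow> real"
  assumes cont: "continuous_on {0..1} \<psi>"
    and second_diff: "\<And>t \<epsilon>. 0 < t \<Longrightarrow> t < 1 \<Longrightarrow> \<epsilon> > 0 \<Longrightarrow>
      \<forall>\<^sub>F h in at_right 0. \<psi> (t + h) + \<psi> (t - h) - 2 * \<psi> t \<le> \<epsilon> * h\<^sup>2"
    and c: "0 < c" "c < 1"
  shows "(1 - c) * \<psi> 0 + c * \<psi> 1 \<le> \<psi> c"
proof (rule ccontr)
  assume "\<not> ?thesis"
  then have D: "(1 - c) * \<psi> 0 + c * \<psi> 1 - \<psi> c > 0" (is "?D > 0") by simp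
  txt \<open>\<open>E\<close> attains a negative minimum inside \<open>(0, 1)\<close>, where its second differences are
    nonnegative, although \<open>\<psi>\<close> contributes at most \<open>?D h\<^sup>2\<close> to them and the added parabola
    \<open>-2 ?D h\<^sup>2\<close>.\<close>
  define E where "E t = \<psi> t - ((1 - t) * \<psi> 0 + t * \<psi> 1) + ?D * t * (1 - t)" for t
  have "continuous_on {0..1} E"
    unfolding E_def by (intro continuous_intros cont)
  then obtain t where t: "t \<in> {0..1}" and min: "\<And>u. u \<in> {0..1} \<Longrightarrow> E t \<le> E u"
    using continuous_attains_inf[of "{0..1}" E] by auto
  have "E c = ?D * (c * (1 - c) - 1)"
    unfolding E_def by (simp add: algebra_simps)
  also have "\<dots> < 0"
  proof -
    have "c * (1 - c) < 1 * 1" using c by (intro mult_strict_mono) auto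
    then show ?thesis using D by (intro mult_pos_neg) auto
  qed
  finally have "E t < 0" using min[of c] c by simp
  moreover have "E 0 = 0" "E 1 = 0" by (simp_all add: E_def)
  ultimately have "t \<noteq> 0" "t \<noteq> 1" by auto
  then have "0 < t" "t < 1" using t by auto
  then obtain b where b: "b > 0" and
    small: "\<And>h. 0 < h \<Longrightarrow> h < b \<Longrightarrow> \<psi> (t + h) + \<psi> (t - h) - 2 * \<psi> t \<le> ?D * h\<^sup>2"
    using second_diff[OF _ _ D] unfolding eventually_at_right_field by blast
  define h where "h = min b (min t (1 - t)) / 2"
  have h: "0 < h" "h < b" "h \<le> t" "h \<le> 1 - t"
    using b \<open>0 < t\<close> \<open>t < 1\<close> by (auto simp: h_def)
  have "0 \<le> E (t + h) + E (t - h) - 2 * E t"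
    using min[of "t + h"] min[of "t - h"] h by auto
  also have "\<dots> = \<psi> (t + h) + \<psi> (t - h) - 2 * \<psi> t - 2 * ?D * h\<^sup>2"
    unfolding E_def by (simp add: algebra_simps power2_eq_square)
  moreover have "?D * h\<^sup>2 > 0" using D h(1) by simp
  ultimately show False using small[OF h(1,2)] by linarith
qed

lemma le_of_local_second_order_bounds:
  fixes \<phi> D :: "real \<Rightarrow> real" and K :: real
  assumes cont: "continuous_on {0..1} \<phi>"
    and local: "\<And>t \<epsilon>. 0 \<le> t \<Longrightarrow> t < 1 \<Longrightarrow> \<epsilon> > 0 \<Longrightarrow>
      \<forall>\<^sub>F h in at 0. \<phi> (t + h) \<le> \<phi> t + h * D t + (K + \<epsilon>) * h\<^sup>2"
  shows "\<phi> 1 \<le> \<phi> 0 + D 0 + K"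
proof -
  define \<psi> where "\<psi> t = \<phi> t - K * t\<^sup>2" for t
  txt \<open>\<open>\<psi>\<close> is concave, so its chord slope on \<open>[0, 1]\<close> is at most its right derivative \<open>D 0\<close>.\<close>
  have above_chord: "(1 - c) * \<psi> 0 + c * \<psi> 1 \<le> \<psi> c" if "0 < c" "c < 1" for c
  proof (rule chord_le_of_second_differences[OF _ _ that])
    show "continuous_on {0..1} \<psi>"
      unfolding \<psi>_def by (intro continuous_intros cont)
    fix t \<epsilon> :: real
    assume "0 < t" "t < 1" "\<epsilon> > 0"
    then have "\<forall>\<^sub>F h in at 0. \<phi> (t + h) \<le> \<phi> t + h * D t + (K + \<epsilon> / 2) * h\<^sup>2"
      using local[of t "\<epsilon> / 2"] by simp
    then have "\<forall>\<^sub>F h in at_right 0. \<phi> (t + h) \<le> \<phi> t + h * D t + (K + \<epsilon> / 2) * h\<^sup>2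
        \<and> \<phi> (t - h) \<le> \<phi> t - h * D t + (K + \<epsilon> / 2) * h\<^sup>2"
      unfolding eventually_at_split eventually_at_left_to_right by (auto elim: eventually_elim2)
    then show "\<forall>\<^sub>F h in at_right 0. \<psi> (t + h) + \<psi> (t - h) - 2 * \<psi> t \<le> \<epsilon> * h\<^sup>2"
      by eventually_elim (simp add: \<psi>_def power2_eq_square algebra_simps)
  qed
  have "\<psi> 1 - \<psi> 0 \<le> D 0 + \<epsilon>" if "\<epsilon> > 0" for \<epsilon>
  proof -
    have "\<forall>\<^sub>F h in at 0. \<phi> h \<le> \<phi> 0 + h * D 0 + (K + \<epsilon>) * h\<^sup>2"
      using local[of 0 \<epsilon>] that by simp
    then obtain b where b: "b > 0"
      and small: "\<And>h. 0 < h \<Longrightarrow> h < b \<Longrightarrow> \<phi> h \<le> \<phi> 0 + h * D 0 + (K + \<epsilon>) * h\<^sup>2"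
      unfolding eventually_at_split eventually_at_right_field by blast
    define h where "h = min b 1 / 2"
    have h: "0 < h" "h < b" "h < 1" using b by (auto simp: h_def)
    have "h * (\<psi> 1 - \<psi> 0) \<le> \<psi> h - \<psi> 0"
      using above_chord[OF h(1,3)] by (simp add: algebra_simps)
    also have "\<dots> \<le> h * (D 0 + \<epsilon> * h)"
      using small[OF h(1,2)] by (simp add: \<psi>_def power2_eq_square algebra_simps)
    also have "\<dots> \<le> h * (D 0 + \<epsilon>)"
      using h that by (intro mult_left_mono) auto
    finally show ?thesis using h(1) by simp
  qed
  then have "\<psi> 1 - \<psi> 0 \<le> D 0" by (rule field_le_epsilon)
  then show ?thesis
    unfolding \<psi>_def by simp
qed

section \<open>H\<ouml>lder and Minkowski inequalities\<close>

lemma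
  fixes u v :: "'a \<Rightarrow> real"
  assumes iu: "integrable M u" and iv: "integrable M v"
    and nn: "\<And>w. w \<in> space M \<Longrightarrow> u w \<ge> 0" "\<And>w. w \<in> space M \<Longrightarrow> v w \<ge> 0"
    and \<alpha>: "0 \<le> \<alpha>" "\<alpha> \<le> 1"
  shows integrable_powr_mult_powr: "integrable M (\<lambda>w. u w powr \<alpha> * v w powr (1 - \<alpha>))"
    and integral_powr_mult_powr_le:
      "(\<integral>w. u w powr \<alpha> * v w powr (1 - \<alpha>) \<partial>M) \<le> (\<integral>w. u w \<partial>M) powr \<alpha> * (\<integral>w. v w \<partial>M) powr (1 - \<alpha>)"
proof -
  have [measurable]: "u \<in> borel_measurable M" "v \<in> borel_measurable M" using iu iv by auto
  show int: "integrable M (\<lambda>w. u w powr \<alpha> * v w powr (1 - \<alpha>))"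
  proof (rule Bochner_Integration.integrable_bound)
    show "integrable M (\<lambda>w. \<alpha> * u w + (1 - \<alpha>) * v w)" using iu iv by auto
    show "AE w in M. norm (u w powr \<alpha> * v w powr (1 - \<alpha>)) \<le> norm (\<alpha> * u w + (1 - \<alpha>) * v w)"
      using weighted_geometric_mean_le nn \<alpha> by (auto intro!: AE_I2)
  qed measurable
  define U V where "U = (\<integral>w. u w \<partial>M)" and "V = (\<integral>w. v w \<partial>M)"
  have "U \<ge> 0" "V \<ge> 0"
    unfolding U_def V_def using nn by (auto intro!: integral_nonneg_AE)
  then consider "U = 0 \<or> V = 0" | "U > 0" "V > 0" by fastforce
  then show "(\<integral>w. u w powr \<alpha> * v w powr (1 - \<alpha>) \<partial>M) \<le> U powr \<alpha> * V powr (1 - \<alpha>)"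
  proof cases
    case 1
    then have "AE w in M. u w = 0 \<or> v w = 0"
      using iu iv nn unfolding U_def V_def by (auto simp: integral_nonneg_eq_0_iff_AE elim: AE_mp)
    then have "(\<integral>w. u w powr \<alpha> * v w powr (1 - \<alpha>) \<partial>M) = 0"
      by (intro integral_eq_zero_AE) (auto elim: AE_mp)
    then show ?thesis by simp
  next
    case 2
    have "u w powr \<alpha> * v w powr (1 - \<alpha>) \<le> U powr \<alpha> * V powr (1 - \<alpha>) * (\<alpha> * (u w / U) + (1 - \<alpha>) * (v w / V))"
      if "w \<in> space M" for w
      using weighted_geometric_mean_le[of "u w / U" "v w / V" \<alpha>] nn[OF that] 2 \<alpha>
      by (simp add: powr_divide field_simps)
    then have "(\<integral>w. u w powr \<alpha> * v w powr (1 - \<alpha>) \<partial>M)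
        \<le> (\<integral>w. U powr \<alpha> * V powr (1 - \<alpha>) * (\<alpha> * (u w / U) + (1 - \<alpha>) * (v w / V)) \<partial>M)"
      using int iu iv by (intro integral_mono) auto
    also have "\<dots> = U powr \<alpha> * V powr (1 - \<alpha>)"
      using iu iv 2 unfolding U_def V_def by (simp add: field_simps)
    finally show ?thesis .
  qed
qed

lemma sum_powr_mult_powr_le:
  fixes a b :: "'i \<Rightarrow> real"
  assumes "finite I" "\<And>i. i \<in> I \<Longrightarrow> a i \<ge> 0" "\<And>i. i \<in> I \<Longrightarrow> b i \<ge> 0" "0 \<le> \<alpha>" "\<alpha> \<le> 1"
  shows "(\<Sum>i\<in>I. a i powr \<alpha> * b i powr (1 - \<alpha>)) \<le> (\<Sum>i\<in>I. a i) powr \<alpha> * (\<Sum>i\<in>I. b i) powr (1 - \<alpha>)"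
  using integral_powr_mult_powr_le[of "count_space I" a b \<alpha>] assms
  by (simp add: integrable_count_space lebesgue_integral_count_space_finite)

lemma Lq_norm_nonneg_eq:
  assumes "\<And>w. w \<in> space M \<Longrightarrow> a w \<ge> 0"
  shows "Lq_norm M q a = (\<integral>w. a w powr q \<partial>M) powr (1 / q)"
  unfolding Lq_norm_def using assms by (simp cong: Bochner_Integration.integral_cong)

lemma
  fixes a b :: "'a \<Rightarrow> real"
  assumes [measurable]: "a \<in> borel_measurable M" "b \<in> borel_measurable M"
    and nn: "\<And>w. w \<in> space M \<Longrightarrow> a w \<ge> 0" "\<And>w. w \<in> space M \<Longrightarrow> b w \<ge> 0"
    and ia: "integrable M (\<lambda>w. a w powr q)" and ib: "integrable M (\<lambda>w. b w powr q)"
    and q: "q \<ge> 1"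
  shows integrable_powr_add: "integrable M (\<lambda>w. (a w + b w) powr q)"
    and Lq_norm_add_le: "Lq_norm M q (\<lambda>w. a w + b w) \<le> Lq_norm M q a + Lq_norm M q b"
proof -
  show iab: "integrable M (\<lambda>w. (a w + b w) powr q)"
  proof (rule Bochner_Integration.integrable_bound)
    show "integrable M (\<lambda>w. 2 powr q * (a w powr q + b w powr q))" using ia ib by simp
    show "AE w in M. norm ((a w + b w) powr q) \<le> norm (2 powr q * (a w powr q + b w powr q))"
      using nn q powr_add_le_two_powr by (intro AE_I2) simp
  qed measurable
  define A B P where "A = (\<integral>w. a w powr q \<partial>M)" and "B = (\<integral>w. b w powr q \<partial>M)"
    and "P = (\<integral>w. (a w + b w) powr q \<partial>M)"
  have "P = (\<integral>w. (a w powr q) powr (1 / q) * ((a w + b w) powr q) powr (1 - 1 / q)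
      + (b w powr q) powr (1 / q) * ((a w + b w) powr q) powr (1 - 1 / q) \<partial>M)"
    unfolding P_def using nn q by (intro Bochner_Integration.integral_cong powr_add_eq_Hoelder_terms) auto
  also have "\<dots> = (\<integral>w. (a w powr q) powr (1 / q) * ((a w + b w) powr q) powr (1 - 1 / q) \<partial>M)
      + (\<integral>w. (b w powr q) powr (1 / q) * ((a w + b w) powr q) powr (1 - 1 / q) \<partial>M)"
    using nn ia ib iab q by (intro Bochner_Integration.integral_add integrable_powr_mult_powr) auto
  also have "\<dots> \<le> (A powr (1 / q) + B powr (1 / q)) * P powr (1 - 1 / q)"
    using nn ia ib iab q unfolding A_def B_def P_def distrib_right
    by (intro add_mono integral_powr_mult_powr_le) auto
  finally have "P powr (1 / q) \<le> A powr (1 / q) + B powr (1 / q)"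
    using nn q unfolding P_def by (intro powr_le_of_le_mult_powr) auto
  then show "Lq_norm M q (\<lambda>w. a w + b w) \<le> Lq_norm M q a + Lq_norm M q b"
    using nn unfolding A_def B_def P_def by (simp add: Lq_norm_nonneg_eq)
qed

lemma Lq_norm_mono:
  assumes [measurable]: "f \<in> borel_measurable M" and "integrable M (\<lambda>w. \<bar>g w\<bar> powr q)"
    and "\<And>w. w \<in> space M \<Longrightarrow> \<bar>f w\<bar> \<le> \<bar>g w\<bar>" and "q > 0"
  shows "Lq_norm M q f \<le> Lq_norm M q g"
proof -
  have "integrable M (\<lambda>w. \<bar>f w\<bar> powr q)"
    using assms by (intro Bochner_Integration.integrable_bound[OF assms(2)]) (auto intro!: AE_I2 powr_mono2)
  then have "(\<integral>w. \<bar>f w\<bar> powr q \<partial>M) \<le> (\<integral>w. \<bar>g w\<bar> powr q \<partial>M)"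
    using assms by (intro integral_mono) (auto intro: powr_mono2)
  then show ?thesis
    unfolding Lq_norm_def using assms by (intro powr_mono2) auto
qed

lemma
  fixes a b :: "'a \<Rightarrow> real"
  assumes [measurable]: "a \<in> borel_measurable M" "b \<in> borel_measurable M"
    and nn: "\<And>w. w \<in> space M \<Longrightarrow> a w \<ge> 0" "\<And>w. w \<in> space M \<Longrightarrow> b w \<ge> 0"
    and ia: "integrable M (\<lambda>w. a w powr q)" and ib: "integrable M (\<lambda>w. b w powr q)"
    and q: "q \<ge> 2"
  shows integrable_powr_mult_square: "integrable M (\<lambda>w. (a w + b w) powr (q - 2) * (b w)\<^sup>2)"
    and integral_powr_mult_square_le:
      "(\<integral>w. (a w + b w) powr (q - 2) * (b w)\<^sup>2 \<partial>M)
        \<le> (Lq_norm M q a + Lq_norm M q b) powr (q - 2) * (Lq_norm M q b)\<^sup>2"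
proof -
  have iab: "integrable M (\<lambda>w. (a w + b w) powr q)"
    using nn ia ib q by (intro integrable_powr_add) auto
  have eq: "(a w + b w) powr (q - 2) * (b w)\<^sup>2
      = ((a w + b w) powr q) powr ((q - 2) / q) * (b w powr q) powr (1 - (q - 2) / q)"
    if "w \<in> space M" for w
  proof -
    have "q * ((q - 2) / q) = q - 2" "q * (1 - (q - 2) / q) = 2" using q by (simp_all add: field_simps)
    then show ?thesis using nn[OF that] by (simp add: powr_powr)
  qed
  have \<alpha>: "0 \<le> (q - 2) / q" "(q - 2) / q \<le> 1" using q by auto
  show "integrable M (\<lambda>w. (a w + b w) powr (q - 2) * (b w)\<^sup>2)"
    using integrable_powr_mult_powr[OF iab ib _ _ \<alpha>] nn
    by (simp add: eq cong: Bochner_Integration.integrable_cong)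
  have "(\<integral>w. (a w + b w) powr (q - 2) * (b w)\<^sup>2 \<partial>M)
      \<le> (\<integral>w. (a w + b w) powr q \<partial>M) powr ((q - 2) / q) * (\<integral>w. b w powr q \<partial>M) powr (1 - (q - 2) / q)"
    using integral_powr_mult_powr_le[OF iab ib _ _ \<alpha>] nn
    by (simp add: eq cong: Bochner_Integration.integral_cong)
  also have "\<dots> = Lq_norm M q (\<lambda>w. a w + b w) powr (q - 2) * (Lq_norm M q b)\<^sup>2"
  proof -
    have "(q - 2) / q = 1 / q * (q - 2)" "1 - (q - 2) / q = 1 / q + 1 / q" using q by (simp_all add: field_simps)
    then show ?thesis
      using nn by (simp only: Lq_norm_nonneg_eq powr_powr power2_eq_square powr_add add_nonneg_nonneg)
  qed
  also have "\<dots> \<le> (Lq_norm M q a + Lq_norm M q b) powr (q - 2) * (Lq_norm M q b)\<^sup>2"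
    using Lq_norm_add_le[OF assms(1-2) nn ia ib] q
    by (intro mult_right_mono powr_mono2) (auto simp: Lq_norm_def)
  finally show "(\<integral>w. (a w + b w) powr (q - 2) * (b w)\<^sup>2 \<partial>M)
    \<le> (Lq_norm M q a + Lq_norm M q b) powr (q - 2) * (Lq_norm M q b)\<^sup>2" .
qed

lemma integral_comp_mult_eq_0_if_cond_exp_eq_0:
  fixes f :: "'b \<Rightarrow> real" and g :: "'a \<Rightarrow> real"
  assumes "finite_measure M" and X: "X \<in> measurable M N"
    and [measurable]: "f \<in> borel_measurable N" "g \<in> borel_measurable M"
    and "integrable M (\<lambda>w. f (X w) * g w)"
    and "AE w in M. real_cond_exp M (vimage_algebra (space M) X N) g w = 0"
  shows "(\<integral>w. f (X w) * g w \<partial>M) = 0"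
proof -
  define F where "F = vimage_algebra (space M) X N"
  have "subalgebra M F"
    using X unfolding F_def subalgebra_def by (simp add: measurable_iff_sets)
  then interpret sigma_finite_subalgebra M F
    using assms(1) by (intro finite_measure_subalgebra_is_sigma_finite) (simp add: finite_measure_subalgebra_def finite_measure_subalgebra_axioms_def)
  have "(\<lambda>w. f (X w)) \<in> borel_measurable F"
    unfolding F_def using X by (intro measurable_compose[OF measurable_vimage_algebra1]) (auto simp: measurable_def)
  then have "(\<integral>w. f (X w) * g w \<partial>M) = (\<integral>w. f (X w) * real_cond_exp M F g w \<partial>M)"
    using assms by (simp add: real_cond_exp_intg(2))
  also have "\<dots> = 0"
    using assms(6) unfolding F_def by (intro integral_eq_zero_AE) (auto elim!: AE_mp)
  finally show ?thesis .
qed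

section \<open>The \<open>\<ell>\<^sup>s\<close> norm\<close>

lemma measurable_vec_nth [measurable (raw)]:
  "f \<in> borel_measurable M \<Longrightarrow> (\<lambda>w. (f w :: real ^ 'd) $ i) \<in> borel_measurable M"
  by (rule measurable_compose[of f]) (auto intro: borel_measurable_continuous_onI continuous_intros)

lemma measurable_snorm [measurable (raw)]:
  "f \<in> borel_measurable M \<Longrightarrow> (\<lambda>w. snorm s (f w :: real ^ 'd)) \<in> borel_measurable M"
  unfolding snorm_def by measurable

lemma snorm_nonneg: "snorm s v \<ge> 0"
  unfolding snorm_def by simp

lemma snorm_power: "s > 0 \<Longrightarrow> snorm s v ^ s = (\<Sum>i\<in>UNIV. \<bar>v $ i\<bar> ^ s)"
  unfolding snorm_def by (simp add: powr_inverse_power sum_nonneg)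

lemma snorm_power_even: "even s \<Longrightarrow> s > 0 \<Longrightarrow> snorm s v ^ s = (\<Sum>i\<in>UNIV. (v $ i) ^ s)"
  by (simp add: snorm_power power_even_abs)

lemma snorm_powr_eq: "s > 0 \<Longrightarrow> snorm s v powr a = (snorm s v ^ s) powr (a / s)"
  using snorm_nonneg[of s v] by (simp add: powr_powr flip: powr_realpow')

lemma snorm_eq_Lq_norm: "s > 0 \<Longrightarrow> snorm s v = Lq_norm (count_space UNIV) (real s) (\<lambda>i. v $ i)"
  unfolding snorm_def Lq_norm_def
  by (simp add: lebesgue_integral_count_space_finite powr_realpow' cong: sum.cong)

lemma abs_nth_le_snorm: "s > 0 \<Longrightarrow> \<bar>v $ i\<bar> \<le> snorm s v"
proof -
  assume "s > 0"
  then have "\<bar>v $ i\<bar> ^ s \<le> snorm s v ^ s"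
    by (simp add: snorm_power) (rule member_le_sum; simp)
  then show ?thesis using \<open>s > 0\<close> snorm_nonneg[of s v] by (simp add: power_mono_iff)
qed

lemma snorm_eq_0_iff: "s > 0 \<Longrightarrow> snorm s v = 0 \<longleftrightarrow> v = 0"
  using abs_nth_le_snorm[of s v] by (auto simp: vec_eq_iff snorm_def)

lemma snorm_zero [simp]: "s > 0 \<Longrightarrow> snorm s 0 = 0"
  by (simp add: snorm_eq_0_iff)

lemma snorm_scaleR: "s > 0 \<Longrightarrow> snorm s (c *\<^sub>R v) = \<bar>c\<bar> * snorm s v"
proof -
  assume "s > 0"
  have "(\<Sum>i\<in>UNIV. \<bar>(c *\<^sub>R v) $ i\<bar> ^ s) = \<bar>c\<bar> ^ s * (\<Sum>i\<in>UNIV. \<bar>v $ i\<bar> ^ s)"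
    by (simp add: abs_mult power_mult_distrib sum_distrib_left)
  then show ?thesis
    using \<open>s > 0\<close> by (simp add: snorm_def powr_mult power_powr_divide[where k=1, simplified] sum_nonneg)
qed

lemma snorm_triangle:
  assumes "s > 0"
  shows "snorm s (x + y) \<le> snorm s x + snorm s y"
proof -
  have "snorm s (x + y) \<le> (\<Sum>i\<in>UNIV. (\<bar>x $ i\<bar> + \<bar>y $ i\<bar>) ^ s) powr (1 / real s)"
    unfolding snorm_def by (intro powr_mono2 sum_mono power_mono) (auto intro: sum_nonneg)
  also have "\<dots> = Lq_norm (count_space UNIV) (real s) (\<lambda>i. \<bar>x $ i\<bar> + \<bar>y $ i\<bar>)"
    unfolding Lq_norm_def using assms
    by (simp add: lebesgue_integral_count_space_finite powr_realpow' cong: sum.cong)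
  also have "\<dots> \<le> snorm s x + snorm s y"
    using Lq_norm_add_le[of "\<lambda>i. \<bar>x $ i\<bar>" "count_space UNIV" "\<lambda>i. \<bar>y $ i\<bar>" "real s"] assms
    by (simp add: snorm_eq_Lq_norm integrable_count_space Lq_norm_def)
  finally show ?thesis .
qed

lemma sum_abs_power_mult_le_snorm:
  assumes "k \<le> s" "s > 0"
  shows "(\<Sum>i\<in>UNIV. \<bar>v $ i\<bar> ^ k * \<bar>y $ i\<bar> ^ (s - k)) \<le> snorm s v ^ k * snorm s y ^ (s - k)"
proof -
  consider "k = 0" | "k = s" | "0 < k" "k < s" using assms by linarith
  then show ?thesis
  proof cases
    case 3
    then have e: "1 - real k / real s = real (s - k) / real s" by (simp add: field_simps of_nat_diff)
    have "(\<Sum>i\<in>UNIV. \<bar>v $ i\<bar> ^ k * \<bar>y $ i\<bar> ^ (s - k))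
        = (\<Sum>i\<in>UNIV. (\<bar>v $ i\<bar> ^ s) powr (k / s) * (\<bar>y $ i\<bar> ^ s) powr (1 - k / s))"
      unfolding e using 3 by (simp add: power_powr_divide del: of_nat_diff)
    also have "\<dots> \<le> (\<Sum>i\<in>UNIV. \<bar>v $ i\<bar> ^ s) powr (k / s) * (\<Sum>i\<in>UNIV. \<bar>y $ i\<bar> ^ s) powr (1 - k / s)"
      using 3 by (intro sum_powr_mult_powr_le) auto
    also have "\<dots> = snorm s v ^ k * snorm s y ^ (s - k)"
      unfolding e using 3 by (simp add: power_powr_divide snorm_nonneg del: of_nat_diff flip: snorm_power)
    finally show ?thesis .
  qed (use assms in \<open>simp_all add: snorm_power\<close>)
qed

lemma
  assumes "s > 0" "\<epsilon> \<ge> 0"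
  shows snorm_le_smoothed_snorm: "snorm s v \<le> (snorm s v ^ s + \<epsilon>) powr (1 / s)"
    and smoothed_snorm_le: "(snorm s v ^ s + \<epsilon>) powr (1 / s) \<le> snorm s v + \<epsilon> powr (1 / s)"
proof -
  have snorm_v: "snorm s v = (snorm s v ^ s) powr (1 / s)"
    using power_powr_divide[of s 1 "snorm s v"] assms snorm_nonneg[of s v] by simp
  show "snorm s v \<le> (snorm s v ^ s + \<epsilon>) powr (1 / s)"
    using assms by (subst snorm_v) (intro powr_mono2; simp add: snorm_nonneg)
  show "(snorm s v ^ s + \<epsilon>) powr (1 / s) \<le> snorm s v + \<epsilon> powr (1 / s)"
    using assms by (subst (2) snorm_v) (intro powr_subadditive; simp add: snorm_nonneg)
qed

lemma abs_sum_power_mult_le_snorm: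
  assumes "s > 0"
  shows "\<bar>\<Sum>i\<in>UNIV. (v $ i) ^ (s - 1) * y $ i\<bar> \<le> snorm s v ^ (s - 1) * snorm s y"
proof -
  have "\<bar>\<Sum>i\<in>UNIV. (v $ i) ^ (s - 1) * y $ i\<bar> \<le> (\<Sum>i\<in>UNIV. \<bar>v $ i\<bar> ^ (s - 1) * \<bar>y $ i\<bar> ^ (s - (s - 1)))"
    using assms by (auto intro: order.trans[OF sum_abs] simp: abs_mult power_abs)
  also have "\<dots> \<le> snorm s v ^ (s - 1) * snorm s y"
    using sum_abs_power_mult_le_snorm[of "s - 1" s v y] assms by simp
  finally show ?thesis .
qed

lemma sum_power_mult_square_le_snorm:
  assumes "even s" "s \<ge> 2"
  shows "(\<Sum>i\<in>UNIV. (v $ i) ^ (s - 2) * (y $ i)\<^sup>2) \<le> snorm s v ^ (s - 2) * (snorm s y)\<^sup>2"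
proof -
  have "(\<Sum>i\<in>UNIV. (v $ i) ^ (s - 2) * (y $ i)\<^sup>2) = (\<Sum>i\<in>UNIV. \<bar>v $ i\<bar> ^ (s - 2) * \<bar>y $ i\<bar> ^ (s - (s - 2)))"
    using assms by (simp add: power_even_abs even_diff)
  also have "\<dots> \<le> snorm s v ^ (s - 2) * (snorm s y)\<^sup>2"
    using sum_abs_power_mult_le_snorm[of "s - 2" s v y] assms by simp
  finally show ?thesis .
qed

section \<open>Pointwise second-order expansion\<close>

lemma has_real_derivative_sum_power:
  fixes x y :: "real ^ 'd"
  shows "((\<lambda>t. \<Sum>j\<in>UNIV. w j * (x $ j + t * y $ j) ^ k) has_real_derivative
    real k * (\<Sum>j\<in>UNIV. w j * (x $ j + t * y $ j) ^ (k - 1) * y $ j)) (at t)"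
  by (auto intro!: derivative_eq_intros simp: sum_distrib_left mult_ac)

locale Lq_ls_exponents =
  fixes q :: real and s :: nat
  assumes q_ge_2: "q \<ge> 2" and s_ge_2: "s \<ge> 2" and even_s: "even s"
begin

abbreviation \<kappa> :: real where "\<kappa> \<equiv> max q (real s) - 1"

lemma s_pos: "s > 0"
  using s_ge_2 by simp

lemma kappa_ge_1: "\<kappa> \<ge> 1"
  using q_ge_2 by simp

text \<open>
  For \<open>\<tau>\<^sup>s = \<bar>v\<bar>\<^sub>s\<^sup>s + \<epsilon>\<close> the left-hand side is the second derivative of
  \<open>t \<mapsto> (\<bar>x + t y\<bar>\<^sub>s\<^sup>s + \<epsilon>)\<^bsup>q/s\<^esup>\<close> at the point \<open>v = x + t y\<close>.
\<close>

lemma curvature_le: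
  fixes v y :: "real ^ 'd"
  assumes "snorm s v \<le> \<tau>" "0 < \<tau>"
  shows "q * (q - s) * (\<tau> powr (q - 2 * s) * (\<Sum>j\<in>UNIV. (v $ j) ^ (s - 1) * y $ j)\<^sup>2)
      + q * (real s - 1) * (\<tau> powr (q - s) * (\<Sum>j\<in>UNIV. (v $ j) ^ (s - 2) * (y $ j)\<^sup>2))
    \<le> q * \<kappa> * (\<tau> powr (q - 2) * (snorm s y)\<^sup>2)"
proof -
  define A B W where "A = (\<Sum>j\<in>UNIV. (v $ j) ^ (s - 1) * y $ j)"
    and "B = (\<Sum>j\<in>UNIV. (v $ j) ^ (s - 2) * (y $ j)\<^sup>2)" and "W = \<tau> powr (q - 2) * (snorm s y)\<^sup>2"
  have \<tau>: "snorm s v ^ k \<le> \<tau> ^ k" for k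
    using assms snorm_nonneg by (intro power_mono) auto
  have "\<bar>A\<bar> \<le> \<tau> ^ (s - 1) * snorm s y"
    unfolding A_def using abs_sum_power_mult_le_snorm[OF s_pos, of v y] \<tau>[of "s - 1"] snorm_nonneg[of s y]
    by (auto intro: order.trans mult_right_mono)
  then have "A\<^sup>2 \<le> (\<tau> ^ (s - 1) * snorm s y)\<^sup>2"
    by (metis abs_ge_zero power2_abs power_mono)
  then have "\<tau> powr (q - 2 * s) * A\<^sup>2 \<le> \<tau> powr (q - 2 * s) * (\<tau> ^ (s - 1) * snorm s y)\<^sup>2"
    by (intro mult_left_mono) auto
  also have "\<dots> = W"
  proof -
    have "real (2 * (s - 1)) = 2 * real s - 2" using s_ge_2 by (simp add: of_nat_diff)
    then show ?thesis
      using assms by (simp add: W_def power_mult_distrib powr_mult_power flip: power_mult)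
  qed
  finally have A_le: "\<tau> powr (q - 2 * s) * A\<^sup>2 \<le> W" .
  have "B \<le> snorm s v ^ (s - 2) * (snorm s y)\<^sup>2"
    unfolding B_def by (rule sum_power_mult_square_le_snorm[OF even_s s_ge_2])
  also have "\<dots> \<le> \<tau> ^ (s - 2) * (snorm s y)\<^sup>2"
    using \<tau>[of "s - 2"] by (intro mult_right_mono) auto
  finally have "\<tau> powr (q - s) * B \<le> \<tau> powr (q - s) * (\<tau> ^ (s - 2) * (snorm s y)\<^sup>2)"
    by (intro mult_left_mono) auto
  also have "\<dots> = W"
    using assms s_ge_2 by (simp add: W_def powr_mult_power mult.assoc[symmetric] of_nat_diff)
  finally have "q * (real s - 1) * (\<tau> powr (q - s) * B) \<le> q * (real s - 1) * W"
    using q_ge_2 s_ge_2 by (intro mult_left_mono) auto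
  moreover have "q * (q - s) * (\<tau> powr (q - 2 * s) * A\<^sup>2) \<le> q * (max q s - s) * W"
  proof (cases "q \<ge> s")
    case True
    then show ?thesis using A_le q_ge_2 by (simp add: max_def mult_left_mono)
  next
    case False
    then have "q * (q - s) * (\<tau> powr (q - 2 * s) * A\<^sup>2) \<le> 0"
      using q_ge_2 by (intro mult_nonpos_nonneg mult_nonneg_nonpos) auto
    then show ?thesis using False by simp
  qed
  ultimately show ?thesis
    unfolding A_def[symmetric] B_def[symmetric] W_def[symmetric] by (simp add: algebra_simps)
qed

text \<open>
  The summand \<open>\<epsilon> > 0\<close> keeps the base of \<open>powr\<close> positive, so the function is twice
  differentiable also where \<open>x + t y = 0\<close>; it is removed by letting \<open>\<epsilon> \<rightarrow> 0\<close> in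
  \<open>snorm_powr_add_le\<close>.
\<close>

lemma
  fixes x y :: "real ^ 'd" and \<epsilon> :: real
  defines "T \<equiv> \<lambda>t. snorm s (x + t *\<^sub>R y) ^ s + \<epsilon>"
    and "A \<equiv> \<lambda>t. \<Sum>j\<in>UNIV. ((x + t *\<^sub>R y) $ j) ^ (s - 1) * y $ j"
    and "B \<equiv> \<lambda>t. \<Sum>j\<in>UNIV. ((x + t *\<^sub>R y) $ j) ^ (s - 2) * (y $ j)\<^sup>2"
  assumes "\<epsilon> > 0"
  shows has_real_derivative_smoothed_snorm_powr:
      "((\<lambda>t. T t powr (q / s)) has_real_derivative q * (T t powr (q / s - 1) * A t)) (at t)"
    and has_real_derivative_smoothed_snorm_powr_deriv:
      "((\<lambda>t. q * (T t powr (q / s - 1) * A t)) has_real_derivative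
        q * (q - s) * ((T t powr (1 / s)) powr (q - 2 * s) * (A t)\<^sup>2)
        + q * (real s - 1) * ((T t powr (1 / s)) powr (q - s) * B t)) (at t)"
proof -
  have T_pos: "T t > 0" for t
    unfolding T_def using assms by (intro add_nonneg_pos zero_le_power snorm_nonneg)
  have dT: "(T has_real_derivative s * A t) (at t)" for t
  proof -
    have "T = (\<lambda>t. (\<Sum>j\<in>UNIV. 1 * (x $ j + t * y $ j) ^ s) + \<epsilon>)"
      using even_s s_pos by (simp add: fun_eq_iff T_def snorm_power_even)
    then show ?thesis
      using DERIV_add[OF has_real_derivative_sum_power[of "\<lambda>_. 1" x y s t] DERIV_const[of \<epsilon> "at t"]]
      by (simp add: A_def)
  qed
  have dA: "(A has_real_derivative (real s - 1) * B t) (at t)"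
  proof -
    have "A = (\<lambda>t. \<Sum>j\<in>UNIV. y $ j * (x $ j + t * y $ j) ^ (s - 1))"
      by (simp add: fun_eq_iff A_def mult.commute)
    moreover have "real (s - 1) * (\<Sum>j\<in>UNIV. y $ j * (x $ j + t * y $ j) ^ (s - 1 - 1) * y $ j)
        = (real s - 1) * B t"
      using s_pos by (simp add: B_def of_nat_diff power2_eq_square mult_ac numeral_2_eq_2)
    ultimately show ?thesis
      using has_real_derivative_sum_power[of "\<lambda>j. y $ j" x y "s - 1" t] by simp
  qed
  show "((\<lambda>t. T t powr (q / s)) has_real_derivative q * (T t powr (q / s - 1) * A t)) (at t)"
    using DERIV_fun_powr[OF dT T_pos, of "q / s"] s_pos by (simp add: mult.assoc)
  have "((\<lambda>t. T t powr (q / s - 1)) has_real_derivative (q / s - 1) * T t powr (q / s - 2) * (s * A t)) (at t)"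
    using DERIV_fun_powr[OF dT T_pos, of "q / s - 1"] by simp
  then have "((\<lambda>t. q * (T t powr (q / s - 1) * A t)) has_real_derivative
      q * ((q / s - 1) * T t powr (q / s - 2) * (s * A t) * A t + (real s - 1) * B t * T t powr (q / s - 1))) (at t)"
    by (intro DERIV_cmult DERIV_mult dA)
  moreover have "T t powr (q / s - 2) = (T t powr (1 / s)) powr (q - 2 * s)"
    and "T t powr (q / s - 1) = (T t powr (1 / s)) powr (q - s)"
    using s_pos by (simp_all add: powr_powr diff_divide_distrib)
  ultimately show "((\<lambda>t. q * (T t powr (q / s - 1) * A t)) has_real_derivative
      q * (q - s) * ((T t powr (1 / s)) powr (q - 2 * s) * (A t)\<^sup>2)
      + q * (real s - 1) * ((T t powr (1 / s)) powr (q - s) * B t)) (at t)"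
    using s_pos by (elim DERIV_cong) (simp add: field_simps power2_eq_square)
qed

lemma snorm_powr_taylor_smoothed:
  fixes x y :: "real ^ 'd"
  assumes "\<epsilon> > 0"
  shows "(snorm s (x + y) ^ s + \<epsilon>) powr (q / s)
    \<le> (snorm s x ^ s + \<epsilon>) powr (q / s)
      + q * (snorm s x ^ s + \<epsilon>) powr (q / s - 1) * (\<Sum>j\<in>UNIV. (x $ j) ^ (s - 1) * y $ j)
      + q * \<kappa> / 2 * ((snorm s x + snorm s y + \<epsilon> powr (1 / s)) powr (q - 2) * (snorm s y)\<^sup>2)"
proof -
  define \<tau> where "\<tau> t = (snorm s (x + t *\<^sub>R y) ^ s + \<epsilon>) powr (1 / s)" for t
  have "\<tau> t \<le> snorm s x + snorm s y + \<epsilon> powr (1 / s)" if "0 < t" "t < 1" for t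
  proof -
    have "snorm s (x + t *\<^sub>R y) \<le> snorm s x + snorm s y"
      using snorm_triangle[of s x "t *\<^sub>R y"] mult_left_le_one_le[OF snorm_nonneg, of t s y] that s_pos
      by (simp add: snorm_scaleR)
    then show ?thesis
      using smoothed_snorm_le[OF s_pos, of \<epsilon> "x + t *\<^sub>R y"] assms by (simp add: \<tau>_def)
  qed
  moreover have "snorm s (x + t *\<^sub>R y) \<le> \<tau> t" for t
    using snorm_le_smoothed_snorm[OF s_pos, of \<epsilon> "x + t *\<^sub>R y"] assms by (simp add: \<tau>_def)
  moreover have "\<tau> t > 0" for t
  proof -
    have "snorm s (x + t *\<^sub>R y) ^ s + \<epsilon> > 0"
      using assms by (intro add_nonneg_pos zero_le_power snorm_nonneg)
    then show ?thesis by (simp add: \<tau>_def)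
  qed
  ultimately have "q * (q - s) * (\<tau> t powr (q - 2 * s) * (\<Sum>j\<in>UNIV. ((x + t *\<^sub>R y) $ j) ^ (s - 1) * y $ j)\<^sup>2)
      + q * (real s - 1) * (\<tau> t powr (q - s) * (\<Sum>j\<in>UNIV. ((x + t *\<^sub>R y) $ j) ^ (s - 2) * (y $ j)\<^sup>2))
    \<le> q * \<kappa> * ((snorm s x + snorm s y + \<epsilon> powr (1 / s)) powr (q - 2) * (snorm s y)\<^sup>2)"
    if "0 < t" "t < 1" for t
    using q_ge_2 kappa_ge_1 that
    by (intro order.trans[OF curvature_le] mult_left_mono mult_right_mono powr_mono2) (auto intro: less_imp_le)
  from Taylor_second_order_le[OF has_real_derivative_smoothed_snorm_powr[OF assms]
      has_real_derivative_smoothed_snorm_powr_deriv[OF assms], OF this[unfolded \<tau>_def]]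
  show ?thesis by simp
qed

text \<open>The gradient of \<open>x \<mapsto> \<bar>x\<bar>\<^sub>s\<^sup>q / q\<close>.\<close>

definition duality_map :: "real ^ 'd \<Rightarrow> real ^ 'd" where
  "duality_map x = (if x = 0 then 0 else (\<chi> j. snorm s x powr (q - s) * (x $ j) ^ (s - 1)))"

lemma inner_duality_map:
  "duality_map x \<bullet> y
    = (if x = 0 then 0 else snorm s x powr (q - real s) * (\<Sum>j\<in>UNIV. (x $ j) ^ (s - 1) * y $ j))"
  by (simp add: duality_map_def inner_vec_def sum_distrib_left mult.assoc)

lemma tendsto_smoothed_duality:
  "((\<lambda>\<epsilon>. (snorm s x ^ s + \<epsilon>) powr (q / s - 1) * (\<Sum>j\<in>UNIV. (x $ j) ^ (s - 1) * y $ j))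
    \<longlongrightarrow> duality_map x \<bullet> y) (at_right 0)"
proof (cases "x = 0")
  case True
  then show ?thesis using s_ge_2 by (simp add: inner_duality_map power_0_left)
next
  case False
  then have "snorm s x ^ s > 0"
    using s_pos snorm_nonneg[of s x] snorm_eq_0_iff[of s x] by simp
  moreover have "(snorm s x ^ s) powr (q / s - 1) = snorm s x powr (q - s)"
    using s_pos by (simp add: snorm_powr_eq[OF s_pos] diff_divide_distrib)
  ultimately show ?thesis
    using False by (auto intro!: tendsto_eq_intros simp: inner_duality_map)
qed

lemma tendsto_smoothed_expansion:
  fixes x y :: "real ^ 'd"
  assumes "y \<noteq> 0"
  shows "((\<lambda>\<epsilon>. (snorm s x ^ s + \<epsilon>) powr (q / s)
      + q * (snorm s x ^ s + \<epsilon>) powr (q / s - 1) * (\<Sum>j\<in>UNIV. (x $ j) ^ (s - 1) * y $ j)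
      + q * \<kappa> / 2 * ((snorm s x + snorm s y + \<epsilon> powr (1 / s)) powr (q - 2) * (snorm s y)\<^sup>2))
    \<longlongrightarrow> snorm s x powr q + q * (duality_map x \<bullet> y)
      + q * \<kappa> / 2 * ((snorm s x + snorm s y) powr (q - 2) * (snorm s y)\<^sup>2)) (at_right 0)"
proof -
  have pos: "\<forall>\<^sub>F \<epsilon> in at_right 0. (\<epsilon> :: real) > 0"
    by (simp add: eventually_at_right_less)
  have L1: "((\<lambda>\<epsilon>. (snorm s x ^ s + \<epsilon>) powr (q / s)) \<longlongrightarrow> snorm s x powr q) (at_right 0)"
    unfolding snorm_powr_eq[OF s_pos, of x q] using q_ge_2 s_pos pos
    by (intro tendsto_powr') (auto intro!: tendsto_eq_intros elim!: eventually_mono simp: snorm_nonneg)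
  have L2: "((\<lambda>\<epsilon>. q * (snorm s x ^ s + \<epsilon>) powr (q / s - 1) * (\<Sum>j\<in>UNIV. (x $ j) ^ (s - 1) * y $ j))
      \<longlongrightarrow> q * (duality_map x \<bullet> y)) (at_right 0)"
    using tendsto_mult_left[OF tendsto_smoothed_duality, of q] by (simp add: mult.assoc)
  have "((\<lambda>\<epsilon>::real. \<epsilon> powr (1 / s)) \<longlongrightarrow> 0) (at_right 0)"
    using s_pos pos by (intro tendsto_zero_powrI) (auto intro: tendsto_ident_at elim!: eventually_mono)
  then have "((\<lambda>\<epsilon>::real. snorm s x + snorm s y + \<epsilon> powr (1 / s)) \<longlongrightarrow> snorm s x + snorm s y) (at_right 0)"
    using tendsto_add[OF tendsto_const] by fastforce
  moreover have "snorm s x + snorm s y \<noteq> 0"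
    using assms s_pos snorm_nonneg[of s x] snorm_nonneg[of s y] snorm_eq_0_iff[of s y] by linarith
  ultimately have L3: "((\<lambda>\<epsilon>. (snorm s x + snorm s y + \<epsilon> powr (1 / s)) powr (q - 2))
      \<longlongrightarrow> (snorm s x + snorm s y) powr (q - 2)) (at_right 0)"
    by (rule tendsto_powr[OF _ tendsto_const])
  show ?thesis
    by (rule tendsto_add[OF tendsto_add[OF L1 L2] tendsto_mult_left[OF tendsto_mult_right[OF L3]]])
qed

lemma snorm_powr_add_le:
  fixes x y :: "real ^ 'd"
  shows "snorm s (x + y) powr q
    \<le> snorm s x powr q + q * (duality_map x \<bullet> y)
      + q * \<kappa> / 2 * ((snorm s x + snorm s y) powr (q - 2) * (snorm s y)\<^sup>2)"
proof (cases "y = 0")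
  case True
  then show ?thesis using s_pos by (simp add: inner_duality_map)
next
  case False
  have "\<forall>\<^sub>F \<epsilon> in at_right 0. snorm s (x + y) powr q
      \<le> (snorm s x ^ s + \<epsilon>) powr (q / s)
        + q * (snorm s x ^ s + \<epsilon>) powr (q / s - 1) * (\<Sum>j\<in>UNIV. (x $ j) ^ (s - 1) * y $ j)
        + q * \<kappa> / 2 * ((snorm s x + snorm s y + \<epsilon> powr (1 / s)) powr (q - 2) * (snorm s y)\<^sup>2)"
    using eventually_at_right_less[of 0]
  proof eventually_elim
    case (elim \<epsilon>)
    have "snorm s (x + y) powr q \<le> (snorm s (x + y) ^ s + \<epsilon>) powr (q / s)"
      unfolding snorm_powr_eq[OF s_pos, of "x + y"] using elim q_ge_2 s_pos by (intro powr_mono2) (auto simp: snorm_nonneg)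
    also note snorm_powr_taylor_smoothed[OF elim]
    finally show ?case .
  qed
  then show ?thesis
    by (rule tendsto_le[OF trivial_limit_at_right_real tendsto_smoothed_expansion[OF False] tendsto_const])
qed

lemma duality_map_nth:
  "duality_map x $ j = (if x = 0 then 0 else snorm s x powr (q - s) * (x $ j) ^ (s - 1))"
  by (simp add: duality_map_def)

lemma measurable_duality_map_nth [measurable (raw)]:
  assumes [measurable]: "f \<in> borel_measurable M"
  shows "(\<lambda>w. duality_map (f w :: real ^ 'd) $ j) \<in> borel_measurable M"
  unfolding duality_map_nth by measurable

lemma abs_duality_map_nth_le: "\<bar>duality_map x $ j\<bar> \<le> snorm s x powr (q - 1)"
proof (cases "x = 0")
  case False
  then have pos: "snorm s x > 0"
    using s_pos snorm_nonneg[of s x] snorm_eq_0_iff[of s x] by simp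
  have "\<bar>duality_map x $ j\<bar> = snorm s x powr (q - s) * \<bar>x $ j\<bar> ^ (s - 1)"
    using False by (simp add: duality_map_nth abs_mult power_abs)
  also have "\<dots> \<le> snorm s x powr (q - s) * snorm s x ^ (s - 1)"
    using s_pos by (intro mult_left_mono power_mono abs_nth_le_snorm) auto
  also have "\<dots> = snorm s x powr (q - 1)"
    using pos s_pos by (simp add: powr_mult_power of_nat_diff)
  finally show ?thesis .
qed (simp add: duality_map_nth)

section \<open>Second-order expansion of the \<open>L\<^sup>q(\<ell>\<^sup>s)\<close> norm\<close>

definition Lq_vec :: "'a measure \<Rightarrow> ('a \<Rightarrow> real ^ 'd) \<Rightarrow> bool" where
  "Lq_vec M U \<longleftrightarrow> U \<in> borel_measurable M \<and> integrable M (\<lambda>w. snorm s (U w) powr q)"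

abbreviation normq :: "'a measure \<Rightarrow> ('a \<Rightarrow> real ^ 'd) \<Rightarrow> real" where
  "normq M U \<equiv> Lq_norm M q (\<lambda>w. snorm s (U w))"

lemma normq_eq: "normq M U = (\<integral>w. snorm s (U w) powr q \<partial>M) powr (1 / q)"
  by (simp add: Lq_norm_nonneg_eq snorm_nonneg)

lemma normq_nonneg: "normq M U \<ge> 0"
  by (simp add: Lq_norm_def)

lemma normq_powr: "normq M U powr q = (\<integral>w. snorm s (U w) powr q \<partial>M)"
  using q_ge_2 by (simp add: normq_eq powr_powr)

lemma normq_square: "(normq M U)\<^sup>2 = (\<integral>w. snorm s (U w) powr q \<partial>M) powr (2 / q)"
  by (simp add: normq_eq power2_eq_square flip: powr_add)

lemma
  assumes "Lq_vec M U"
  shows Lq_vec_scaleR: "Lq_vec M (\<lambda>w. c *\<^sub>R U w)"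
    and normq_scaleR: "normq M (\<lambda>w. c *\<^sub>R U w) = \<bar>c\<bar> * normq M U"
proof -
  have eq: "snorm s (c *\<^sub>R U w) powr q = \<bar>c\<bar> powr q * snorm s (U w) powr q" for w
    using s_pos by (simp add: snorm_scaleR powr_mult snorm_nonneg)
  show "Lq_vec M (\<lambda>w. c *\<^sub>R U w)"
    using assms by (simp add: Lq_vec_def eq borel_measurable_scaleR)
  show "normq M (\<lambda>w. c *\<^sub>R U w) = \<bar>c\<bar> * normq M U"
    using q_ge_2 by (simp add: normq_eq eq powr_mult powr_powr)
qed

lemma
  assumes U: "Lq_vec M U" and V: "Lq_vec M V"
  shows Lq_vec_add: "Lq_vec M (\<lambda>w. U w + V w)"
    and normq_add_le: "normq M (\<lambda>w. U w + V w) \<le> normq M U + normq M V"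
proof -
  have [measurable]: "U \<in> borel_measurable M" "V \<in> borel_measurable M"
    using U V by (auto simp: Lq_vec_def)
  have int: "integrable M (\<lambda>w. (snorm s (U w) + snorm s (V w)) powr q)"
    using U V q_ge_2 by (intro integrable_powr_add) (auto simp: Lq_vec_def snorm_nonneg)
  have le: "snorm s (U w + V w) \<le> snorm s (U w) + snorm s (V w)" for w
    using s_pos by (rule snorm_triangle)
  show "Lq_vec M (\<lambda>w. U w + V w)"
    unfolding Lq_vec_def using q_ge_2 le
    by (auto intro!: Bochner_Integration.integrable_bound[OF int] AE_I2 powr_mono2 simp: snorm_nonneg)
  have "normq M (\<lambda>w. U w + V w) \<le> Lq_norm M q (\<lambda>w. snorm s (U w) + snorm s (V w))"
    using int le q_ge_2 by (intro Lq_norm_mono) (auto simp: snorm_nonneg)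
  also have "\<dots> \<le> normq M U + normq M V"
    using U V q_ge_2 by (intro Lq_norm_add_le) (auto simp: Lq_vec_def snorm_nonneg)
  finally show "normq M (\<lambda>w. U w + V w) \<le> normq M U + normq M V" .
qed

lemma normq_add_eq_if_normq_eq_0:
  assumes U: "Lq_vec M U" "normq M U = 0" and [measurable]: "V \<in> borel_measurable M"
  shows "normq M (\<lambda>w. U w + V w) = normq M V"
proof -
  have [measurable]: "U \<in> borel_measurable M" using U by (simp add: Lq_vec_def)
  have "(\<integral>w. snorm s (U w) powr q \<partial>M) = 0"
    using U q_ge_2 by (simp add: normq_eq)
  then have "AE w in M. U w = 0"
    using U s_pos by (subst (asm) integral_nonneg_eq_0_iff_AE) (auto simp: Lq_vec_def snorm_eq_0_iff)
  then show ?thesis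
    unfolding normq_eq by (intro arg_cong[where f = "\<lambda>x. x powr (1 / q)"] integral_cong_AE) auto
qed

lemma integrable_duality_map_nth_mult:
  fixes U Y :: "'a \<Rightarrow> real ^ 'd"
  assumes "Lq_vec M U" "Lq_vec M Y"
  shows "integrable M (\<lambda>w. duality_map (U w) $ j * Y w $ j)"
proof (rule Bochner_Integration.integrable_bound)
  show "integrable M (\<lambda>w. snorm s (U w) powr q + snorm s (Y w) powr q)"
    using assms by (simp add: Lq_vec_def)
  have "\<bar>duality_map x $ j * y $ j\<bar> \<le> snorm s x powr q + snorm s y powr q" for x y :: "real ^ 'd"
  proof -
    have "\<bar>duality_map x $ j * y $ j\<bar> \<le> snorm s x powr (q - 1) * snorm s y"
      unfolding abs_mult using s_pos
      by (intro mult_mono abs_duality_map_nth_le abs_nth_le_snorm) auto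
    also have "\<dots> \<le> snorm s x powr q + snorm s y powr q"
      using q_ge_2 by (intro powr_mult_le_powr_add snorm_nonneg) auto
    finally show ?thesis .
  qed
  then show "AE w in M. norm (duality_map (U w) $ j * Y w $ j) \<le> norm (snorm s (U w) powr q + snorm s (Y w) powr q)"
    by (intro AE_I2) simp
  have [measurable]: "U \<in> borel_measurable M" "Y \<in> borel_measurable M"
    using assms by (simp_all add: Lq_vec_def)
  show "(\<lambda>w. duality_map (U w) $ j * Y w $ j) \<in> borel_measurable M"
    by measurable
qed

lemma integrable_inner_duality_map:
  fixes U Y :: "'a \<Rightarrow> real ^ 'd"
  assumes "Lq_vec M U" "Lq_vec M Y"
  shows "integrable M (\<lambda>w. duality_map (U w) \<bullet> Y w)"
  unfolding inner_vec_def using integrable_duality_map_nth_mult[OF assms] by simp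

lemma integral_snorm_powr_add_le:
  fixes U Y :: "'a \<Rightarrow> real ^ 'd"
  assumes U: "Lq_vec M U" and Y: "Lq_vec M Y"
  shows "(\<integral>w. snorm s (U w + h *\<^sub>R Y w) powr q \<partial>M)
    \<le> (\<integral>w. snorm s (U w) powr q \<partial>M) + q * h * (\<integral>w. duality_map (U w) \<bullet> Y w \<partial>M)
      + q * \<kappa> / 2 * ((normq M U + \<bar>h\<bar> * normq M Y) powr (q - 2) * (\<bar>h\<bar> * normq M Y)\<^sup>2)"
proof -
  have [measurable]: "U \<in> borel_measurable M" "Y \<in> borel_measurable M"
    using U Y by (simp_all add: Lq_vec_def)
  have hY: "Lq_vec M (\<lambda>w. h *\<^sub>R Y w)" using Y by (rule Lq_vec_scaleR)
  note R_int = integrable_powr_mult_square[of "\<lambda>w. snorm s (U w)" M "\<lambda>w. snorm s (h *\<^sub>R Y w)" q]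
  note R_le = integral_powr_mult_square_le[of "\<lambda>w. snorm s (U w)" M "\<lambda>w. snorm s (h *\<^sub>R Y w)" q]
  have "(\<integral>w. snorm s (U w + h *\<^sub>R Y w) powr q \<partial>M)
      \<le> (\<integral>w. snorm s (U w) powr q + q * (h * (duality_map (U w) \<bullet> Y w))
        + q * \<kappa> / 2 * ((snorm s (U w) + snorm s (h *\<^sub>R Y w)) powr (q - 2) * (snorm s (h *\<^sub>R Y w))\<^sup>2) \<partial>M)"
    using Lq_vec_add[OF U hY] U Y hY snorm_powr_add_le[of "U _" "h *\<^sub>R Y _"] R_int q_ge_2
    by (intro integral_mono) (auto simp: Lq_vec_def snorm_nonneg integrable_inner_duality_map)
  also have "\<dots> = (\<integral>w. snorm s (U w) powr q \<partial>M) + q * h * (\<integral>w. duality_map (U w) \<bullet> Y w \<partial>M)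
      + q * \<kappa> / 2 * (\<integral>w. (snorm s (U w) + snorm s (h *\<^sub>R Y w)) powr (q - 2) * (snorm s (h *\<^sub>R Y w))\<^sup>2 \<partial>M)"
    using U Y hY R_int q_ge_2 by (simp add: Lq_vec_def snorm_nonneg integrable_inner_duality_map)
  also have "\<dots> \<le> (\<integral>w. snorm s (U w) powr q \<partial>M) + q * h * (\<integral>w. duality_map (U w) \<bullet> Y w \<partial>M)
      + q * \<kappa> / 2 * ((normq M U + \<bar>h\<bar> * normq M Y) powr (q - 2) * (\<bar>h\<bar> * normq M Y)\<^sup>2)"
    using U hY R_le q_ge_2 kappa_ge_1
    by (intro add_left_mono mult_left_mono) (auto simp: Lq_vec_def snorm_nonneg normq_scaleR[OF Y])
  finally show ?thesis .
qed

lemma normq_square_expansion: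
  fixes U Y :: "'a \<Rightarrow> real ^ 'd"
  assumes U: "Lq_vec M U" and Y: "Lq_vec M Y" and pos: "normq M U > 0"
  shows "(normq M (\<lambda>w. U w + h *\<^sub>R Y w))\<^sup>2
    \<le> (normq M U)\<^sup>2 + h * (2 * normq M U powr (2 - q) * (\<integral>w. duality_map (U w) \<bullet> Y w \<partial>M))
      + \<kappa> * h\<^sup>2 * (normq M Y)\<^sup>2 * (1 + \<bar>h\<bar> * normq M Y / normq M U) powr (q - 2)"
proof -
  define G G\<^sub>0 E where "G = (\<integral>w. snorm s (U w + h *\<^sub>R Y w) powr q \<partial>M)"
    and "G\<^sub>0 = (\<integral>w. snorm s (U w) powr q \<partial>M)" and "E = (\<integral>w. duality_map (U w) \<bullet> Y w \<partial>M)"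
  define \<Delta> where "\<Delta> = q * h * E
    + q * \<kappa> / 2 * ((normq M U + \<bar>h\<bar> * normq M Y) powr (q - 2) * (\<bar>h\<bar> * normq M Y)\<^sup>2)"
  have G\<^sub>0: "G\<^sub>0 = normq M U powr q" by (simp add: G\<^sub>0_def normq_powr)
  then have "G\<^sub>0 > 0" using pos by simp
  have "G powr (2 / q) \<le> G\<^sub>0 powr (2 / q) + 2 / q * G\<^sub>0 powr (2 / q - 1) * (G - G\<^sub>0)"
    using \<open>G\<^sub>0 > 0\<close> q_ge_2 by (intro powr_le_tangent) (auto simp: G_def)
  also have "\<dots> \<le> G\<^sub>0 powr (2 / q) + 2 / q * G\<^sub>0 powr (2 / q - 1) * \<Delta>"
    using integral_snorm_powr_add_le[OF U Y, of h] q_ge_2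
    by (intro add_left_mono mult_left_mono) (auto simp: G_def G\<^sub>0_def E_def \<Delta>_def)
  also have "2 / q * G\<^sub>0 powr (2 / q - 1) * \<Delta>
      = h * (2 * normq M U powr (2 - q) * E)
        + \<kappa> * h\<^sup>2 * (normq M Y)\<^sup>2 * (1 + \<bar>h\<bar> * normq M Y / normq M U) powr (q - 2)"
  proof -
    have "q * (2 / q - 1) = 2 - q" using q_ge_2 by (simp add: field_simps)
    then have "G\<^sub>0 powr (2 / q - 1) = normq M U powr (2 - q)"
      by (simp add: G\<^sub>0 powr_powr)
    moreover have "normq M U powr (2 - q) * (normq M U + \<bar>h\<bar> * normq M Y) powr (q - 2)
        = (1 + \<bar>h\<bar> * normq M Y / normq M U) powr (q - 2)"
    proof -
      have "1 + \<bar>h\<bar> * normq M Y / normq M U = (normq M U + \<bar>h\<bar> * normq M Y) / normq M U"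
        using pos by (simp add: field_simps)
      moreover have "normq M U powr (2 - q) = 1 / normq M U powr (q - 2)"
        using powr_minus_divide[of "normq M U" "q - 2"] by simp
      ultimately show ?thesis
        using pos normq_nonneg[of M Y] by (simp add: powr_divide)
    qed
    ultimately show ?thesis
      using q_ge_2 by (simp add: \<Delta>_def power_mult_distrib field_simps)
  qed
  finally show ?thesis
    using q_ge_2 by (simp add: G_def G\<^sub>0_def E_def normq_square)
qed

text \<open>The derivative of \<open>h \<mapsto> (normq M (\<lambda>w. U w + h *\<^sub>R Y w))\<^sup>2\<close> at \<open>h = 0\<close>.\<close>

definition normq_square_deriv :: "'a measure \<Rightarrow> ('a \<Rightarrow> real ^ 'd) \<Rightarrow> ('a \<Rightarrow> real ^ 'd) \<Rightarrow> real" where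
  "normq_square_deriv M U Y = (if normq M U = 0 then 0
     else 2 * normq M U powr (2 - q) * (\<integral>w. duality_map (U w) \<bullet> Y w \<partial>M))"

lemma normq_square_local_expansion:
  fixes U Y :: "'a \<Rightarrow> real ^ 'd"
  assumes U: "Lq_vec M U" and Y: "Lq_vec M Y" and "\<epsilon> > 0"
  shows "\<forall>\<^sub>F h in at 0. (normq M (\<lambda>w. U w + h *\<^sub>R Y w))\<^sup>2
    \<le> (normq M U)\<^sup>2 + h * normq_square_deriv M U Y + (\<kappa> * (normq M Y)\<^sup>2 + \<epsilon>) * h\<^sup>2"
proof (cases "normq M U = 0")
  case True
  have [measurable]: "Y \<in> borel_measurable M" using Y by (simp add: Lq_vec_def)
  have "(\<lambda>w. h *\<^sub>R Y w) \<in> borel_measurable M" for h by measurable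
  then have "(normq M (\<lambda>w. U w + h *\<^sub>R Y w))\<^sup>2 = h\<^sup>2 * (normq M Y)\<^sup>2" for h
    by (simp add: normq_add_eq_if_normq_eq_0[OF U True] normq_scaleR[OF Y] power_mult_distrib)
  moreover have "h\<^sup>2 * (normq M Y)\<^sup>2 \<le> (\<kappa> * (normq M Y)\<^sup>2 + \<epsilon>) * h\<^sup>2" for h
  proof -
    have "h\<^sup>2 * (normq M Y)\<^sup>2 \<le> \<kappa> * (normq M Y)\<^sup>2 * h\<^sup>2"
      using mult_right_mono[OF kappa_ge_1, of "h\<^sup>2 * (normq M Y)\<^sup>2"] by (simp add: mult_ac)
    moreover have "0 \<le> \<epsilon> * h\<^sup>2" using \<open>\<epsilon> > 0\<close> by simp
    ultimately show ?thesis by (simp add: distrib_right)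
  qed
  ultimately show ?thesis
    using True by (simp add: normq_square_deriv_def)
next
  case False
  then have pos: "normq M U > 0" using normq_nonneg[of M U] by simp
  have "((\<lambda>h. \<kappa> * (normq M Y)\<^sup>2 * (1 + \<bar>h\<bar> * normq M Y / normq M U) powr (q - 2))
      \<longlongrightarrow> \<kappa> * (normq M Y)\<^sup>2 * (1 + \<bar>0\<bar> * normq M Y / normq M U) powr (q - 2)) (at 0)"
    by (intro tendsto_intros tendsto_powr) (use pos in auto)
  then have "\<forall>\<^sub>F h in at 0. \<kappa> * (normq M Y)\<^sup>2 * (1 + \<bar>h\<bar> * normq M Y / normq M U) powr (q - 2)
      < \<kappa> * (normq M Y)\<^sup>2 + \<epsilon>"
    using \<open>\<epsilon> > 0\<close> by (intro order_tendstoD) auto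
  then show ?thesis
  proof eventually_elim
    case (elim h)
    then have "h\<^sup>2 * (\<kappa> * (normq M Y)\<^sup>2 * (1 + \<bar>h\<bar> * normq M Y / normq M U) powr (q - 2))
        \<le> h\<^sup>2 * (\<kappa> * (normq M Y)\<^sup>2 + \<epsilon>)"
      by (intro mult_left_mono) auto
    then show ?case
      using normq_square_expansion[OF U Y pos, of h] False
      by (simp add: normq_square_deriv_def algebra_simps)
  qed
qed

lemma continuous_on_normq_line:
  fixes X Y :: "'a \<Rightarrow> real ^ 'd"
  assumes X: "Lq_vec M X" and Y: "Lq_vec M Y"
  shows "continuous_on A (\<lambda>t. normq M (\<lambda>w. X w + t *\<^sub>R Y w))"
proof (rule lipschitz_on_continuous_on)
  have lip: "normq M (\<lambda>w. X w + t' *\<^sub>R Y w) \<le> normq M (\<lambda>w. X w + t *\<^sub>R Y w) + \<bar>t' - t\<bar> * normq M Y" for t t'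
  proof -
    have "normq M (\<lambda>w. X w + t' *\<^sub>R Y w) = normq M (\<lambda>w. (X w + t *\<^sub>R Y w) + (t' - t) *\<^sub>R Y w)"
      by (simp add: algebra_simps)
    also have "\<dots> \<le> normq M (\<lambda>w. X w + t *\<^sub>R Y w) + normq M (\<lambda>w. (t' - t) *\<^sub>R Y w)"
      by (intro normq_add_le Lq_vec_add Lq_vec_scaleR X Y)
    finally show ?thesis
      by (simp add: normq_scaleR[OF Y])
  qed
  show "lipschitz_on (normq M Y) A (\<lambda>t. normq M (\<lambda>w. X w + t *\<^sub>R Y w))"
  proof (rule lipschitz_onI)
    fix t t' :: real
    show "dist (normq M (\<lambda>w. X w + t *\<^sub>R Y w)) (normq M (\<lambda>w. X w + t' *\<^sub>R Y w)) \<le> normq M Y * dist t t'"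
      using lip[of t t'] lip[of t' t] by (simp add: dist_real_def abs_le_iff abs_minus_commute mult.commute)
  qed (rule normq_nonneg)
qed

lemma normq_add_square_le:
  fixes X Y :: "'a \<Rightarrow> real ^ 'd"
  assumes X: "Lq_vec M X" and Y: "Lq_vec M Y"
  shows "(normq M (\<lambda>w. X w + Y w))\<^sup>2 \<le> (normq M X)\<^sup>2 + normq_square_deriv M X Y + \<kappa> * (normq M Y)\<^sup>2"
proof -
  define X' where "X' t = (\<lambda>w. X w + t *\<^sub>R Y w)" for t
  have "(normq M (X' 1))\<^sup>2 \<le> (normq M (X' 0))\<^sup>2 + normq_square_deriv M (X' 0) Y + \<kappa> * (normq M Y)\<^sup>2"
  proof (rule le_of_local_second_order_bounds)
    show "continuous_on {0..1} (\<lambda>t. (normq M (X' t))\<^sup>2)"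
      unfolding X'_def by (intro continuous_intros continuous_on_normq_line X Y)
    fix t \<epsilon> :: real
    assume "\<epsilon> > 0"
    have "X' (t + h) = (\<lambda>w. X' t w + h *\<^sub>R Y w)" for h
      by (simp add: X'_def algebra_simps)
    then show "\<forall>\<^sub>F h in at 0. (normq M (X' (t + h)))\<^sup>2
        \<le> (normq M (X' t))\<^sup>2 + h * normq_square_deriv M (X' t) Y + (\<kappa> * (normq M Y)\<^sup>2 + \<epsilon>) * h\<^sup>2"
      using normq_square_local_expansion[OF _ Y \<open>\<epsilon> > 0\<close>, of "X' t"] X Y
      by (simp add: X'_def Lq_vec_add Lq_vec_scaleR)
  qed
  then show ?thesis
    by (simp add: X'_def)
qed

lemma integral_inner_duality_map_eq_0:
  fixes X Y :: "'a \<Rightarrow> real ^ 'd"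
  assumes "finite_measure M" and X: "Lq_vec M X" and Y: "Lq_vec M Y"
    and cond_exp: "\<forall>j. AE w in M. real_cond_exp M (vimage_algebra (space M) X borel) (\<lambda>w. Y w $ j) w = 0"
  shows "(\<integral>w. duality_map (X w) \<bullet> Y w \<partial>M) = 0"
proof -
  have [measurable]: "X \<in> borel_measurable M" "Y \<in> borel_measurable M"
    using X Y by (simp_all add: Lq_vec_def)
  have "(\<integral>w. duality_map (X w) $ j * Y w $ j \<partial>M) = 0" for j
    using assms(1) integrable_duality_map_nth_mult[OF X Y] cond_exp
    by (intro integral_comp_mult_eq_0_if_cond_exp_eq_0[where f = "\<lambda>x. duality_map x $ j"]) auto
  then show ?thesis
    unfolding inner_vec_def using integrable_duality_map_nth_mult[OF X Y]
    by (simp add: Bochner_Integration.integral_sum)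
qed

end

theorem mainTheorem9:
  fixes M :: "'a measure" and q :: real and s :: nat
    and X Y :: "'a \<Rightarrow> real ^ 'd"
  assumes "prob_space M"
    and "q \<ge> 2" and "s \<ge> 2" and "even s"
    and "X \<in> borel_measurable M" and "Y \<in> borel_measurable M"
    and "integrable M (\<lambda>\<omega>. snorm s (X \<omega>) powr q)"
    and "integrable M (\<lambda>\<omega>. snorm s (Y \<omega>) powr q)"
  shows "((Lq_norm M q (\<lambda>\<omega>. snorm s (X \<omega> + Y \<omega>)))\<^sup>2
           \<le> (Lq_norm M q (\<lambda>\<omega>. snorm s (X \<omega>)))\<^sup>2
             + (if Lq_norm M q (\<lambda>\<omega>. snorm s (X \<omega>)) = 0 then 0
                else 2 * Lq_norm M q (\<lambda>\<omega>. snorm s (X \<omega>)) powr (2 - q)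
                     * (\<integral>\<omega>. (if X \<omega> = 0 then 0
                              else snorm s (X \<omega>) powr (q - real s)
                                   * (\<Sum>j\<in>UNIV. (X \<omega> $ j) ^ (s - 1) * Y \<omega> $ j)) \<partial>M))
             + (max q (real s) - 1) * (Lq_norm M q (\<lambda>\<omega>. snorm s (Y \<omega>)))\<^sup>2)
     \<and> ((\<forall>j. AE \<omega> in M.
            real_cond_exp M (vimage_algebra (space M) X borel) (\<lambda>\<omega>. Y \<omega> $ j) \<omega> = 0)
         \<longrightarrow> (Lq_norm M q (\<lambda>\<omega>. snorm s (X \<omega> + Y \<omega>)))\<^sup>2
           \<le> (Lq_norm M q (\<lambda>\<omega>. snorm s (X \<omega>)))\<^sup>2
             + (max q (real s) - 1) * (Lq_norm M q (\<lambda>\<omega>. snorm s (Y \<omega>)))\<^sup>2)"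
proof -
  interpret Lq_ls_exponents q s
    using assms(2-4) by unfold_locales
  have X: "Lq_vec M X" and Y: "Lq_vec M Y"
    using assms(5-8) by (simp_all add: Lq_vec_def)
  have deriv: "normq_square_deriv M X Y
      = (if normq M X = 0 then 0
         else 2 * normq M X powr (2 - q) * (\<integral>\<omega>. (if X \<omega> = 0 then 0
           else snorm s (X \<omega>) powr (q - real s) * (\<Sum>j\<in>UNIV. (X \<omega> $ j) ^ (s - 1) * Y \<omega> $ j)) \<partial>M))"
    by (simp add: normq_square_deriv_def inner_duality_map)
  have "normq_square_deriv M X Y = 0"
    if "\<forall>j. AE \<omega> in M. real_cond_exp M (vimage_algebra (space M) X borel) (\<lambda>\<omega>. Y \<omega> $ j) \<omega> = 0"
    using integral_inner_duality_map_eq_0[OF _ X Y that] assms(1)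
    by (simp add: normq_square_deriv_def prob_space_def)
  then show ?thesis
    using normq_add_square_le[OF X Y] unfolding deriv by auto
qed

end
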